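(* Let $(X,\tau_\delta)_{\delta>0}$ be a Hilbert dilation system (not necessarily simple), and let $H,V\subseteq X$ be subspaces with $\dim H=\dim V\ge1$ and $V$ dilation-invariant. Define $f(\delta)=\cos\angle(\tau_\delta H,V)$ for $\delta>0$. Then $f$ is unimodal in the sense: whenever $0<a<b<c$ and $f(b)<f(c)$, we have $f(a)<f(b)$.
   Context: Hilbert dilation system: $X$ a finite-dimensional real Hilbert space, $X=\bigoplus_{\nu=1}^mX_\nu$ orthogonal, $\tau_\delta|_{X_\nu}=\delta^{-\nu}\mathrm{id}$ ($\delta>0$). $V$ is dilation-invariant if $\tau_\delta V=V$ for all $\delta>0$. On $\bigwedge^kX$ use the inner product with $\langle v_1\wedge\dots\wedge v_k,w_1\wedge\dots\wedge w_k\rangle=\det(\langle v_i,w_j\rangle)$; for a $k$-dimensional subspace $W$ with basis $w_1,\ldots,w_k$ let $\omega_W=w_1\wedge\dots\wedge w_k$. For $k$-dimensional subspaces $V,W$, $\cos\angle(V,W)=|\langle\omega_V,\omega_W\rangle|/(|\omega_V||\omega_W|)$ (independent of bases). *)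

theory Defs
  imports "HOL-Analysis.Analysis"
begin

definition det_nat :: "nat \<Rightarrow> (nat \<Rightarrow> nat \<Rightarrow> real) \<Rightarrow> real" where
  "det_nat k M = (\<Sum>p\<in>{p. p permutes {..<k}}. of_int (sign p) * (\<Prod>i<k. M i (p i)))"

text \<open>Inner product of simple k-vectors v_1 wedge ... wedge v_k and w_1 wedge ... wedge w_k:
  det(<v_i,w_j>).\<close>
definition wedge_inner :: "nat \<Rightarrow> (nat \<Rightarrow> 'a::real_inner) \<Rightarrow> (nat \<Rightarrow> 'a) \<Rightarrow> real" where
  "wedge_inner k v w = det_nat k (\<lambda>i j. inner (v i) (w j))"

definition ordered_basis :: "'a::real_vector set \<Rightarrow> nat \<Rightarrow> (nat \<Rightarrow> 'a) \<Rightarrow> bool" where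
  "ordered_basis W k b \<longleftrightarrow> inj_on b {..<k} \<and> independent (b ` {..<k}) \<and> span (b ` {..<k}) = W"

definition cos_angle :: "'a::euclidean_space set \<Rightarrow> 'a set \<Rightarrow> real" where
  "cos_angle V W = (let k = dim V;
      v = (SOME b. ordered_basis V k b);
      w = (SOME b. ordered_basis W k b)
    in \<bar>wedge_inner k v w\<bar> / (sqrt (wedge_inner k v v) * sqrt (wedge_inner k w w)))"

definition hilbert_dilation_system ::
    "nat \<Rightarrow> (nat \<Rightarrow> 'a::euclidean_space set) \<Rightarrow> (real \<Rightarrow> 'a \<Rightarrow> 'a) \<Rightarrow> bool" where
  "hilbert_dilation_system m Xs tau \<longleftrightarrow>
     (\<forall>\<nu>\<in>{1..m}. subspace (Xs \<nu>)) \<and>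
     (\<forall>\<nu>\<in>{1..m}. \<forall>\<mu>\<in>{1..m}. \<nu> \<noteq> \<mu> \<longrightarrow> (\<forall>x\<in>Xs \<nu>. \<forall>y\<in>Xs \<mu>. inner x y = 0)) \<and>
     span (\<Union>\<nu>\<in>{1..m}. Xs \<nu>) = UNIV \<and>
     (\<forall>d>0. linear (tau d)) \<and>
     (\<forall>d>0. \<forall>\<nu>\<in>{1..m}. \<forall>x\<in>Xs \<nu>. tau d x = (d powr (- real \<nu>)) *\<^sub>R x)"

definition dilation_invariant :: "(real \<Rightarrow> 'a \<Rightarrow> 'a) \<Rightarrow> 'a set \<Rightarrow> bool" where
  "dilation_invariant tau V \<longleftrightarrow> (\<forall>d>0. tau d ` V = V)"

end

theory Submission
  imports Defs "Jordan_Normal_Form.Determinant"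
begin

(* Since V is dilation-invariant it has a basis u of common eigenvectors, tau_d u_j = d^(-nu_j) u_j.
   For a basis h of H, self-adjointness of tau_d turns <omega_(tau_d H), omega_V> into
   d^(-sum nu_j) <omega_H, omega_V>, and the Cauchy-Binet formula in an orthonormal eigenbasis makes
   the Gram determinant of tau_d h a nonnegative combination of real powers of d.  Hence
   cos angle(tau_d H, V) = K / sqrt (g d) with t |-> g (exp t) convex, and a convex function that
   decreases between ln b and ln c is strictly larger at ln a than at ln b. *)

lemma det_nat_mat: "det_nat k M = Determinant.det (Matrix.mat k k (\<lambda>(i,j). M i j))"
  unfolding det_nat_def Determinant.det_def by (auto simp: atLeast0LessThan intro!: sum.cong prod.cong)

lemma det_nat_cong:
  assumes "\<And>i j. i < k \<Longrightarrow> j < k \<Longrightarrow> M i j = N i j"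
  shows "det_nat k M = det_nat k N"
  unfolding det_nat_def
proof (intro sum.cong refl arg_cong2[where f="(*)"] prod.cong)
  fix p i assume "p \<in> {p. p permutes {..<k}}" "i \<in> {..<k}"
  then show "M i (p i) = N i (p i)" using assms permutes_in_image by fastforce
qed

lemma det_nat_mult:
  "det_nat k (\<lambda>i j. \<Sum>l<k. P i l * M l j) = det_nat k P * det_nat k M"
proof -
  have "Matrix.mat k k (\<lambda>(i,j). \<Sum>l<k. P i l * M l j) =
        Matrix.mat k k (\<lambda>(i,j). P i j) * Matrix.mat k k (\<lambda>(i,j). M i j)"
    by (rule eq_matI) (auto simp: scalar_prod_def atLeast0LessThan intro!: sum.cong)
  then show ?thesis unfolding det_nat_mat
    by (simp add: det_mult[where n=k])
qed

lemma det_nat_transpose: "det_nat k (\<lambda>i j. M j i) = det_nat k M"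
proof -
  have "Matrix.mat k k (\<lambda>(i,j). M j i) = transpose_mat (Matrix.mat k k (\<lambda>(i,j). M i j))"
    by (rule eq_matI) auto
  then show ?thesis unfolding det_nat_mat by (simp add: det_transpose[where n=k])
qed

lemma det_nat_permute_rows:
  assumes p: "p permutes {..<k}"
  shows "det_nat k (\<lambda>i j. M (p i) j) = of_int (sign p) * det_nat k M"
proof -
  have p': "p permutes {0..<k}" using p by (simp add: atLeast0LessThan)
  have "Matrix.mat k k (\<lambda>(i,j). M (p i) j) =
        Matrix.mat k k (\<lambda>(i,j). (Matrix.mat k k (\<lambda>(i,j). M i j)) $$ (p i, j))"
    by (rule eq_matI) (use p permutes_in_image in fastforce)+
  then show ?thesis unfolding det_nat_mat
    using det_permute_rows[OF _ p', of "Matrix.mat k k (\<lambda>(i,j). M i j)"] by simp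
qed

lemma det_nat_id: "det_nat k (\<lambda>i j. if i = j then 1 else 0) = 1"
proof -
  have "Matrix.mat k k (\<lambda>(i,j). if i = j then (1::real) else 0) = 1\<^sub>m k"
    by (rule eq_matI) auto
  then show ?thesis unfolding det_nat_mat by simp
qed

lemma det_nat_scale_cols:
  "det_nat k (\<lambda>i j. M i j * r j) = (\<Prod>j<k. r j) * det_nat k M"
  unfolding det_nat_def sum_distrib_left
proof (rule sum.cong[OF refl])
  fix p assume "p \<in> {p. p permutes {..<k}}"
  then have p: "p permutes {..<k}" by simp
  have "(\<Prod>i<k. r (p i)) = (\<Prod>j<k. r j)"
    using prod.permute[OF p, of r] by (simp add: o_def)
  then show "of_int (sign p) * (\<Prod>i<k. M i (p i) * r (p i)) =
    (\<Prod>j<k. r j) * (of_int (sign p) * (\<Prod>i<k. M i (p i)))"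
    by (simp add: prod.distrib)
qed

lemma det_nat_sum_rows:
  assumes "finite E"
  shows "det_nat k (\<lambda>i j. \<Sum>e\<in>E. g i e j) =
         (\<Sum>\<phi>\<in>PiE {..<k} (\<lambda>_. E). det_nat k (\<lambda>i j. g i (\<phi> i) j))"
proof -
  have "det_nat k (\<lambda>i j. \<Sum>e\<in>E. g i e j) =
     (\<Sum>p\<in>{p. p permutes {..<k}}. of_int (sign p) *
        (\<Sum>\<phi>\<in>PiE {..<k} (\<lambda>_. E). \<Prod>i<k. g i (\<phi> i) (p i)))"
    unfolding det_nat_def
    by (intro sum.cong refl arg_cong2[where f="(*)"]) (simp add: prod_sum_PiE assms)
  also have "\<dots> = (\<Sum>\<phi>\<in>PiE {..<k} (\<lambda>_. E). det_nat k (\<lambda>i j. g i (\<phi> i) j))"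
    unfolding det_nat_def sum_distrib_left by (rule sum.swap)
  finally show ?thesis .
qed

lemma det_nat_scale_rows:
  "det_nat k (\<lambda>i j. r i * M i j) = (\<Prod>i<k. r i) * det_nat k M"
  unfolding det_nat_def by (simp add: prod.distrib sum_distrib_left mult_ac)

lemma compose_permutes_PiE:
  fixes k :: nat
  assumes p: "p permutes {..<k}" and \<phi>: "\<phi> \<in> PiE {..<k} (\<lambda>_. E)"
  shows "\<phi> \<circ> p \<in> PiE {..<k} (\<lambda>_. E)"
proof -
  have "\<And>i. i \<notin> {..<k} \<Longrightarrow> p i = i" using p by (simp add: permutes_def)
  moreover have "\<And>i. i \<in> {..<k} \<Longrightarrow> p i \<in> {..<k}" using permutes_in_image[OF p] by simp
  ultimately show ?thesis using \<phi> by (auto simp: PiE_def Pi_def extensional_def)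
qed

lemma sum_PiE_compose_permutes:
  fixes k :: nat
  assumes p: "p permutes {..<k}"
  shows "(\<Sum>\<phi>\<in>PiE {..<k} (\<lambda>_. E). F (\<phi> \<circ> p)) = (\<Sum>\<phi>\<in>PiE {..<k} (\<lambda>_. E). F \<phi>)"
proof -
  let ?q = "Hilbert_Choice.inv p"
  have q: "?q permutes {..<k}" using p by (rule permutes_inv)
  have cancel: "\<phi> \<circ> ?q \<circ> p = \<phi>" "\<phi> \<circ> p \<circ> ?q = \<phi>" for \<phi> :: "nat \<Rightarrow> 'b"
    using permutes_inv_o[OF p] by (simp_all add: o_assoc[symmetric])
  show ?thesis
    by (rule sum.reindex_bij_witness[where i="\<lambda>\<phi>. \<phi> \<circ> ?q" and j="\<lambda>\<phi>. \<phi> \<circ> p"])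
      (simp_all add: cancel compose_permutes_PiE[OF p] compose_permutes_PiE[OF q])
qed

lemma fact_mult_sum_PiE:
  "fact k * (\<Sum>\<phi>\<in>PiE {..<k} (\<lambda>_. E). F \<phi>) =
    (\<Sum>\<phi>\<in>PiE {..<k} (\<lambda>_. E). \<Sum>p\<in>{p. p permutes {..<k}}. F (\<phi> \<circ> p))"
proof -
  have "card {p. p permutes {..<k}} = fact k" by (rule card_permutations) auto
  then have "fact k * (\<Sum>\<phi>\<in>PiE {..<k} (\<lambda>_. E). F \<phi>) =
      (\<Sum>p\<in>{p. p permutes {..<k}}. \<Sum>\<phi>\<in>PiE {..<k} (\<lambda>_. E). F (\<phi> \<circ> p))"
    by (simp add: sum_PiE_compose_permutes)
  then show ?thesis by (simp add: sum.swap[of _ _ "PiE {..<k} (\<lambda>_. E)"])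
qed

text \<open>The Cauchy-Binet formula for a weighted Gram matrix, with the minors indexed by
  k-tuples rather than k-subsets of E; each k-subset occurs k! times.\<close>
lemma det_nat_gram_sum:
  assumes E: "finite E"
  shows "fact k * det_nat k (\<lambda>i j. \<Sum>e\<in>E. c e * a i e * a j e) =
    (\<Sum>\<phi>\<in>PiE {..<k} (\<lambda>_. E). (\<Prod>i<k. c (\<phi> i)) * (det_nat k (\<lambda>i j. a j (\<phi> i)))\<^sup>2)"
proof -
  define D where "D \<phi> = det_nat k (\<lambda>i j. a j (\<phi> i))" for \<phi>
  define F where "F \<phi> = (\<Prod>i<k. c (\<phi> i) * a i (\<phi> i)) * D \<phi>" for \<phi>
  have "det_nat k (\<lambda>i j. \<Sum>e\<in>E. c e * a i e * a j e) = (\<Sum>\<phi>\<in>PiE {..<k} (\<lambda>_. E). F \<phi>)"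
    unfolding det_nat_sum_rows[OF E]
  proof (rule sum.cong[OF refl])
    fix \<phi> :: "nat \<Rightarrow> 'a"
    show "det_nat k (\<lambda>i j. c (\<phi> i) * a i (\<phi> i) * a j (\<phi> i)) = F \<phi>"
      using det_nat_scale_rows[of k "\<lambda>i. c (\<phi> i) * a i (\<phi> i)" "\<lambda>i j. a j (\<phi> i)"]
      unfolding F_def D_def by simp
  qed
  moreover have "(\<Sum>p\<in>{p. p permutes {..<k}}. F (\<phi> \<circ> p)) = (\<Prod>i<k. c (\<phi> i)) * (D \<phi>)\<^sup>2" for \<phi>
  proof -
    have "F (\<phi> \<circ> p) = (\<Prod>i<k. c (\<phi> i)) * D \<phi> * (of_int (sign p) * (\<Prod>i<k. a i (\<phi> (p i))))"
      if p: "p permutes {..<k}" for p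
    proof -
      have "D (\<phi> \<circ> p) = of_int (sign p) * D \<phi>"
        unfolding D_def using det_nat_permute_rows[OF p, of "\<lambda>i j. a j (\<phi> i)"] by simp
      moreover have "(\<Prod>i<k. c (\<phi> (p i))) = (\<Prod>i<k. c (\<phi> i))"
        using prod.permute[OF p, of "\<lambda>i. c (\<phi> i)"] by (simp add: o_def)
      ultimately show ?thesis unfolding F_def by (simp add: prod.distrib mult_ac)
    qed
    then have "(\<Sum>p\<in>{p. p permutes {..<k}}. F (\<phi> \<circ> p)) =
        (\<Prod>i<k. c (\<phi> i)) * D \<phi> * (\<Sum>p\<in>{p. p permutes {..<k}}. of_int (sign p) * (\<Prod>i<k. a i (\<phi> (p i))))"
      by (simp add: sum_distrib_left)
    also have "(\<Sum>p\<in>{p. p permutes {..<k}}. of_int (sign p) * (\<Prod>i<k. a i (\<phi> (p i)))) = D \<phi>"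
      unfolding D_def det_nat_transpose[of k "\<lambda>i j. a i (\<phi> j)"] by (simp add: det_nat_def)
    finally show ?thesis by (simp only: power2_eq_square mult.assoc)
  qed
  ultimately show ?thesis unfolding D_def using fact_mult_sum_PiE[of k F E] by simp
qed

lemma wedge_inner_self_nonneg:
  fixes v :: "nat \<Rightarrow> 'a::euclidean_space"
  shows "wedge_inner k v v \<ge> 0"
proof -
  have "fact k * wedge_inner k v v =
      (\<Sum>\<phi>\<in>PiE {..<k} (\<lambda>_. Basis). (det_nat k (\<lambda>i j. inner (v j) (\<phi> i)))\<^sup>2)"
    using det_nat_gram_sum[of Basis k "\<lambda>_. 1" "\<lambda>i b. inner (v i) b"]
    unfolding wedge_inner_def by (simp flip: euclidean_inner)
  also have "\<dots> \<ge> 0" by (intro sum_nonneg) simp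
  finally have "0 \<le> fact k * wedge_inner k v v" .
  moreover have "(0::real) < fact k" by simp
  ultimately show ?thesis by (simp add: zero_le_mult_iff)
qed

lemma wedge_inner_commute: "wedge_inner k v w = wedge_inner k w v"
  unfolding wedge_inner_def by (subst det_nat_transpose[symmetric]) (simp add: inner_commute)

lemma wedge_inner_change_left:
  assumes "\<And>i. i < k \<Longrightarrow> b' i = (\<Sum>l<k. P i l *\<^sub>R b l)"
  shows "wedge_inner k b' w = det_nat k P * wedge_inner k b w"
proof -
  have "wedge_inner k b' w = det_nat k (\<lambda>i j. \<Sum>l<k. P i l * inner (b l) (w j))"
    unfolding wedge_inner_def
    by (rule det_nat_cong) (simp add: assms inner_sum_left)
  also have "\<dots> = det_nat k P * wedge_inner k b w"
    unfolding wedge_inner_def by (rule det_nat_mult)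
  finally show ?thesis .
qed

lemma ordered_basis_coordinates:
  assumes "ordered_basis W k b" and "x \<in> W"
  obtains c where "x = (\<Sum>l<k. c l *\<^sub>R b l)"
proof -
  have inj: "inj_on b {..<k}" and "x \<in> span (b ` {..<k})"
    using assms by (auto simp: ordered_basis_def)
  then obtain u where "x = (\<Sum>v\<in>b ` {..<k}. u v *\<^sub>R v)"
    using span_finite[of "b ` {..<k}"] by auto
  then have "x = (\<Sum>l<k. u (b l) *\<^sub>R b l)" by (simp add: sum.reindex[OF inj])
  then show ?thesis by (rule that)
qed

lemma ordered_basis_coordinates_zero:
  assumes ob: "ordered_basis W k b" and z: "(\<Sum>l<k. c l *\<^sub>R b l) = 0" and l: "l < k"
  shows "c l = 0"
proof (rule ccontr)
  assume "c l \<noteq> 0"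
  have inj: "inj_on b {..<k}" and ind: "independent (b ` {..<k})"
    using ob by (auto simp: ordered_basis_def)
  define u where "u v = c (the_inv_into {..<k} b v)" for v
  have ub: "u (b i) = c i" if "i < k" for i
    unfolding u_def using the_inv_into_f_f[OF inj] that by simp
  have "(\<Sum>v\<in>b ` {..<k}. u v *\<^sub>R v) = (\<Sum>i<k. c i *\<^sub>R b i)"
    by (simp add: sum.reindex[OF inj] ub)
  then have "(\<Sum>v\<in>b ` {..<k}. u v *\<^sub>R v) = 0" using z by simp
  moreover have "\<exists>v\<in>b ` {..<k}. u v \<noteq> 0" using l \<open>c l \<noteq> 0\<close> ub by force
  ultimately have "dependent (b ` {..<k})"
    using dependent_finite[of "b ` {..<k}"] by blast
  then show False using ind by simp
qed

lemma ordered_basis_dim: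
  assumes "ordered_basis W k b"
  shows "dim W = k"
proof -
  have inj: "inj_on b {..<k}" and ind: "independent (b ` {..<k})" and sp: "span (b ` {..<k}) = W"
    using assms by (auto simp: ordered_basis_def)
  have "dim W = card (b ` {..<k})" using dim_span_eq_card_independent[OF ind] sp by simp
  also have "\<dots> = k" using card_image[OF inj] by simp
  finally show ?thesis .
qed

lemma ordered_basis_from_spanning:
  fixes W :: "'a::euclidean_space set"
  assumes W: "subspace W" and S: "S \<subseteq> W" "W \<subseteq> span S"
  obtains b where "ordered_basis W (dim W) b" and "\<And>i. i < dim W \<Longrightarrow> b i \<in> S"
proof -
  obtain B where B: "B \<subseteq> S" "independent B" "S \<subseteq> span B"
    using basis_exists[of S] by metis
  have spB: "span B = W"
  proof
    show "span B \<subseteq> W" using B(1) S(1) W by (intro span_minimal) auto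
    have "span S \<subseteq> span B" using B(3) by (simp add: span_minimal)
    then show "W \<subseteq> span B" using S(2) by blast
  qed
  have dW: "dim W = card B" using dim_span_eq_card_independent[OF B(2)] spB by simp
  obtain b where bb: "bij_betw b {0..<card B} B"
    using ex_bij_betw_nat_finite[OF finiteI_independent[OF B(2)]] by blast
  have "ordered_basis W (dim W) b"
    unfolding ordered_basis_def dW using bb B(2) spB by (auto simp: bij_betw_def atLeast0LessThan)
  moreover have "b i \<in> S" if "i < dim W" for i
    using bb B(1) dW that by (auto simp: bij_betw_def atLeast0LessThan)
  ultimately show ?thesis by (rule that)
qed

lemma ordered_basis_change:
  assumes ob: "ordered_basis W k b" and ob': "ordered_basis W k b'"
  obtains P where "\<And>i. i < k \<Longrightarrow> b' i = (\<Sum>l<k. P i l *\<^sub>R b l)" and "det_nat k P \<noteq> 0"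
proof -
  have in_W: "b i \<in> W" "b' i \<in> W" if "i < k" for i
    using ob ob' that by (auto simp: ordered_basis_def intro: span_base)
  have "\<exists>c. b' i = (\<Sum>l<k. c l *\<^sub>R b l)" if "i < k" for i
    using ordered_basis_coordinates[OF ob in_W(2)[OF that]] by blast
  then obtain P where P: "\<And>i. i < k \<Longrightarrow> b' i = (\<Sum>l<k. P i l *\<^sub>R b l)" by metis
  have "\<exists>c. b i = (\<Sum>l<k. c l *\<^sub>R b' l)" if "i < k" for i
    using ordered_basis_coordinates[OF ob' in_W(1)[OF that]] by blast
  then obtain Q where Q: "\<And>i. i < k \<Longrightarrow> b i = (\<Sum>l<k. Q i l *\<^sub>R b' l)" by metis
  have PQ: "(\<Sum>l<k. P i l * Q l j) = (if i = j then 1 else 0)" if i: "i < k" and j: "j < k" for i j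
  proof -
    have "b' i = (\<Sum>l<k. \<Sum>j<k. (P i l * Q l j) *\<^sub>R b' j)"
      using P[OF i] Q by (simp add: scaleR_sum_right)
    also have "\<dots> = (\<Sum>j<k. (\<Sum>l<k. P i l * Q l j) *\<^sub>R b' j)"
      by (subst sum.swap) (simp add: scaleR_sum_left)
    finally have "(\<Sum>j<k. (\<Sum>l<k. P i l * Q l j) *\<^sub>R b' j) = b' i" ..
    also have "b' i = (\<Sum>j<k. if i = j then b' j else 0)"
      using i by (simp add: sum.delta)
    also have "\<dots> = (\<Sum>j<k. (if i = j then 1 else 0) *\<^sub>R b' j)"
      by (rule sum.cong) auto
    finally have "(\<Sum>j<k. ((\<Sum>l<k. P i l * Q l j) - (if i = j then 1 else 0)) *\<^sub>R b' j) = 0"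
      by (simp add: scaleR_left_diff_distrib sum_subtractf)
    from ordered_basis_coordinates_zero[OF ob' this j] show ?thesis by simp
  qed
  have "det_nat k P * det_nat k Q = det_nat k (\<lambda>i j. if i = j then 1 else 0)"
    unfolding det_nat_mult[symmetric] by (rule det_nat_cong) (simp add: PQ)
  then have "det_nat k P \<noteq> 0" by (auto simp: det_nat_id)
  with P show ?thesis by (rule that)
qed

lemma cos_angle_ordered_basis:
  assumes obA: "ordered_basis A k b" and obB: "ordered_basis B k c"
  shows "cos_angle A B =
    \<bar>wedge_inner k b c\<bar> / (sqrt (wedge_inner k b b) * sqrt (wedge_inner k c c))"
proof -
  define b0 where "b0 = (SOME b. ordered_basis A k b)"
  define c0 where "c0 = (SOME b. ordered_basis B k b)"
  have "ordered_basis A k b0" unfolding b0_def by (rule someI[of "ordered_basis A k", OF obA])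
  then obtain P where P: "\<And>i. i < k \<Longrightarrow> b0 i = (\<Sum>l<k. P i l *\<^sub>R b l)" and p: "det_nat k P \<noteq> 0"
    using ordered_basis_change[OF obA] by blast
  have "ordered_basis B k c0" unfolding c0_def by (rule someI[of "ordered_basis B k", OF obB])
  then obtain Q where Q: "\<And>i. i < k \<Longrightarrow> c0 i = (\<Sum>l<k. Q i l *\<^sub>R c l)" and q: "det_nat k Q \<noteq> 0"
    using ordered_basis_change[OF obB] by blast
  have chP: "wedge_inner k b0 w = det_nat k P * wedge_inner k b w" for w
    using P by (rule wedge_inner_change_left)
  have chQ: "wedge_inner k c0 w = det_nat k Q * wedge_inner k c w" for w
    using Q by (rule wedge_inner_change_left)
  have "wedge_inner k b0 c0 = det_nat k P * det_nat k Q * wedge_inner k b c"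
    using chP[of c0] chQ[of b] wedge_inner_commute[of k b c0] wedge_inner_commute[of k c b]
    by simp
  moreover have "wedge_inner k b0 b0 = (det_nat k P * det_nat k P) * wedge_inner k b b"
    using chP[of b0] chP[of b] wedge_inner_commute[of k b b0] by simp
  moreover have "wedge_inner k c0 c0 = (det_nat k Q * det_nat k Q) * wedge_inner k c c"
    using chQ[of c0] chQ[of c] wedge_inner_commute[of k c c0] by simp
  moreover have "cos_angle A B =
      \<bar>wedge_inner k b0 c0\<bar> / (sqrt (wedge_inner k b0 b0) * sqrt (wedge_inner k c0 c0))"
    unfolding cos_angle_def Let_def ordered_basis_dim[OF obA] b0_def c0_def ..
  ultimately show ?thesis
    using p q by (simp add: real_sqrt_mult abs_mult)
qed

lemma invariant_subspace_eigencomponents: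
  fixes T :: "'a::real_vector \<Rightarrow> 'a"
  assumes T: "linear T" and V: "subspace V" and TV: "T ` V \<subseteq> V"
    and "finite S" and "inj_on c S"
    and "\<And>i. i \<in> S \<Longrightarrow> T (y i) = c i *\<^sub>R y i" and "(\<Sum>i\<in>S. y i) \<in> V"
  shows "\<forall>i\<in>S. y i \<in> V"
  using assms(4-)
proof (induction S arbitrary: y rule: finite_induct)
  case empty
  then show ?case by simp
next
  case (insert j S)
  define x where "x = (\<Sum>i\<in>insert j S. y i)"
  have x: "x = y j + (\<Sum>i\<in>S. y i)" unfolding x_def using insert.hyps by simp
  define z where "z i = (c i - c j) *\<^sub>R y i" for i
  \<comment> \<open>T - c j kills the j-th component and leaves an eigenvector sum over S\<close>
  have "T x = c j *\<^sub>R y j + (\<Sum>i\<in>S. c i *\<^sub>R y i)"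
    using insert.prems(2) unfolding x by (simp add: linear_add[OF T] linear_sum[OF T])
  then have "(\<Sum>i\<in>S. z i) = T x - c j *\<^sub>R x"
    unfolding x z_def
    by (simp add: scaleR_left_diff_distrib sum_subtractf scaleR_sum_right scaleR_add_right)
  also have "\<dots> \<in> V" using insert.prems(3) TV V unfolding x_def
    by (auto intro: subspace_diff subspace_scale)
  finally have "\<forall>i\<in>S. z i \<in> V"
    using insert.prems by (intro insert.IH) (auto simp: z_def linear_scale[OF T])
  moreover have "c i \<noteq> c j" if "i \<in> S" for i
    using insert.prems(1) insert.hyps(2) that unfolding inj_on_def by blast
  ultimately have yS: "\<forall>i\<in>S. y i \<in> V"
    using V by (metis z_def subspace_scale scaleR_scaleR right_minus_eq
        left_inverse scaleR_one)
  have "y j = x - (\<Sum>i\<in>S. y i)" using x by simp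
  also have "\<dots> \<in> V" using insert.prems(3) yS V unfolding x_def
    by (simp add: subspace_diff subspace_sum)
  finally show ?case using yS by simp
qed

definition homogeneous :: "(real \<Rightarrow> 'a::real_vector \<Rightarrow> 'a) \<Rightarrow> real \<Rightarrow> 'a \<Rightarrow> bool" where
  "homogeneous tau \<nu> x \<longleftrightarrow> (\<forall>d>0. tau d x = d powr (- \<nu>) *\<^sub>R x)"

locale dilation_eigenbasis =
  fixes tau :: "real \<Rightarrow> 'a::euclidean_space \<Rightarrow> 'a" and E :: "'a set" and w :: "'a \<Rightarrow> real"
  assumes finite_E: "finite E" and orthogonal_E: "pairwise real_inner_class.orthogonal E"
    and norm_E: "\<And>e. e \<in> E \<Longrightarrow> norm e = 1" and span_E: "span E = UNIV"
    and linear_tau: "\<And>d. 0 < d \<Longrightarrow> linear (tau d)"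
    and tau_E: "\<And>d e. 0 < d \<Longrightarrow> e \<in> E \<Longrightarrow> tau d e = d powr (- w e) *\<^sub>R e"
begin

lemma inner_E: "e \<in> E \<Longrightarrow> e' \<in> E \<Longrightarrow> inner e e' = (if e = e' then 1 else 0)"
  using orthogonal_E norm_E by (auto simp: pairwise_def real_inner_class.orthogonal_def norm_eq_1)

lemma expand_E: "(\<Sum>e\<in>E. inner x e *\<^sub>R e) = x"
  using orthogonal_E norm_E finite_E by (intro orthonormal_basis_expand) (auto simp: span_E)

lemma tau_expand:
  assumes "0 < d"
  shows "tau d x = (\<Sum>e\<in>E. (d powr (- w e) * inner x e) *\<^sub>R e)"
proof -
  have "tau d x = (\<Sum>e\<in>E. inner x e *\<^sub>R tau d e)"
    by (subst expand_E[symmetric, of x])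
      (simp add: linear_sum[OF linear_tau[OF assms]] linear_scale[OF linear_tau[OF assms]])
  then show ?thesis by (simp add: tau_E[OF assms] mult.commute)
qed

lemma inner_tau_E:
  assumes "0 < d" and "e \<in> E"
  shows "inner (tau d x) e = d powr (- w e) * inner x e"
  using assms finite_E
  by (simp add: tau_expand inner_sum_left inner_E if_distrib sum.delta' cong: if_cong)

lemma inner_tau_tau:
  assumes "0 < d"
  shows "inner (tau d x) (tau d z) = (\<Sum>e\<in>E. (d powr (- w e))\<^sup>2 * inner x e * inner z e)"
  unfolding tau_expand[OF assms, of x] inner_sum_left
  by (intro sum.cong refl)
    (simp add: inner_commute[of _ "tau d z"] inner_tau_E[OF assms] power2_eq_square)

lemma tau_self_adjoint:
  assumes "0 < d"
  shows "inner (tau d x) z = inner x (tau d z)"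
  using assms by (simp add: tau_expand inner_sum_left inner_sum_right inner_commute mult_ac)

lemma inj_tau:
  assumes "0 < d"
  shows "inj (tau d)"
proof (rule linear_injective_0[OF linear_tau[OF assms], THEN iffD2], intro allI impI)
  fix x assume "tau d x = 0"
  then have "inner x e = 0" if "e \<in> E" for e
    using inner_tau_E[OF assms that, of x] assms by simp
  then show "x = 0" using expand_E[of x] by simp
qed

lemma ordered_basis_tau_image:
  assumes "0 < d" and "ordered_basis H k h"
  shows "ordered_basis (tau d ` H) k (\<lambda>i. tau d (h i))"
proof -
  note lin = linear_tau[OF assms(1)] and inj = inj_tau[OF assms(1)]
  have h: "inj_on h {..<k}" "independent (h ` {..<k})" "span (h ` {..<k}) = H"
    using assms(2) by (auto simp: ordered_basis_def)
  have img: "(\<lambda>i. tau d (h i)) ` {..<k} = tau d ` (h ` {..<k})" by (simp add: image_image)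
  have "inj_on (\<lambda>i. tau d (h i)) {..<k}"
    using h(1) inj by (auto simp: inj_on_def inj_def)
  moreover have "independent (tau d ` (h ` {..<k}))"
    using linear_independent_injective_image[OF lin h(2)] inj by (simp add: inj_on_subset)
  moreover have "span (tau d ` (h ` {..<k})) = tau d ` H"
    unfolding span_linear_image[OF lin] h(3) ..
  ultimately show ?thesis by (simp add: ordered_basis_def img)
qed

lemma dilation_invariant_subset_span_homogeneous:
  assumes V: "subspace V" and "dilation_invariant tau V"
  shows "V \<subseteq> span (V \<inter> {x. \<exists>\<nu>. homogeneous tau \<nu> x})"
proof
  fix x assume x: "x \<in> V"
  define y where "y \<nu> = (\<Sum>e\<in>{e\<in>E. w e = \<nu>}. inner x e *\<^sub>R e)" for \<nu>
  have hom: "homogeneous tau \<nu> (y \<nu>)" for \<nu>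
    unfolding homogeneous_def y_def
    by (simp add: linear_sum[OF linear_tau] linear_scale[OF linear_tau] tau_E scaleR_sum_right
        mult.commute)
  have x_sum: "x = (\<Sum>\<nu>\<in>w ` E. y \<nu>)"
    unfolding y_def using expand_E[of x] finite_E by (simp add: sum.group)
  have "\<forall>\<nu>\<in>w ` E. y \<nu> \<in> V"
  proof (rule invariant_subspace_eigencomponents[where T="tau 2" and c="\<lambda>\<nu>. 2 powr (- \<nu>)"])
    show "tau 2 ` V \<subseteq> V" using assms(2) by (simp add: dilation_invariant_def)
    show "inj_on (\<lambda>\<nu>. 2 powr (- \<nu>)) (w ` E)" by (auto simp: inj_on_def powr_inj)
    show "(\<Sum>\<nu>\<in>w ` E. y \<nu>) \<in> V" using x x_sum by simp
  qed (use V linear_tau finite_E hom in \<open>auto simp: homogeneous_def\<close>)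
  then show "x \<in> span (V \<inter> {x. \<exists>\<nu>. homogeneous tau \<nu> x})"
    unfolding x_sum using hom by (intro span_sum span_base) auto
qed


lemma wedge_inner_tau_homogeneous:
  assumes d: "0 < d" and u: "\<And>j. j < k \<Longrightarrow> homogeneous tau (\<nu> j) (u j)"
  shows "wedge_inner k (\<lambda>i. tau d (h i)) u = d powr (- (\<Sum>j<k. \<nu> j)) * wedge_inner k h u"
proof -
  have "wedge_inner k (\<lambda>i. tau d (h i)) u = det_nat k (\<lambda>i j. inner (h i) (u j) * d powr (- \<nu> j))"
    unfolding wedge_inner_def
    by (rule det_nat_cong) (use d u in \<open>simp add: tau_self_adjoint homogeneous_def mult.commute\<close>)
  also have "\<dots> = (\<Prod>j<k. d powr (- \<nu> j)) * wedge_inner k h u"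
    unfolding wedge_inner_def by (rule det_nat_scale_cols)
  also have "(\<Prod>j<k. d powr (- \<nu> j)) = d powr (- (\<Sum>j<k. \<nu> j))"
    using powr_sum[of d "\<lambda>j. - \<nu> j" "{..<k}"] d by (simp add: sum_negf)
  finally show ?thesis .
qed

lemma fact_wedge_inner_tau_self:
  assumes d: "0 < d"
  shows "fact k * wedge_inner k (\<lambda>i. tau d (h i)) (\<lambda>i. tau d (h i)) =
    (\<Sum>\<phi>\<in>PiE {..<k} (\<lambda>_. E). (det_nat k (\<lambda>i j. inner (h j) (\<phi> i)))\<^sup>2 *
      d powr (- 2 * (\<Sum>i<k. w (\<phi> i))))"
proof -
  have "fact k * wedge_inner k (\<lambda>i. tau d (h i)) (\<lambda>i. tau d (h i)) =
    (\<Sum>\<phi>\<in>PiE {..<k} (\<lambda>_. E). (\<Prod>i<k. (d powr (- w (\<phi> i)))\<^sup>2) *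
      (det_nat k (\<lambda>i j. inner (h j) (\<phi> i)))\<^sup>2)"
    using det_nat_gram_sum[OF finite_E, of k "\<lambda>e. (d powr (- w e))\<^sup>2" "\<lambda>i e. inner (h i) e"]
    unfolding wedge_inner_def inner_tau_tau[OF d] by simp
  also have "\<dots> = (\<Sum>\<phi>\<in>PiE {..<k} (\<lambda>_. E). (det_nat k (\<lambda>i j. inner (h j) (\<phi> i)))\<^sup>2 *
      d powr (- 2 * (\<Sum>i<k. w (\<phi> i))))"
  proof (rule sum.cong[OF refl])
    fix \<phi> :: "nat \<Rightarrow> 'a"
    have "(\<Prod>i<k. (d powr (- w (\<phi> i)))\<^sup>2) = (\<Prod>i<k. d powr (- 2 * w (\<phi> i)))"
      by (simp add: power2_eq_square flip: powr_add)
    also have "\<dots> = d powr (- 2 * (\<Sum>i<k. w (\<phi> i)))"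
      using d by (simp add: powr_sum sum_distrib_left)
    finally show "(\<Prod>i<k. (d powr (- w (\<phi> i)))\<^sup>2) * (det_nat k (\<lambda>i j. inner (h j) (\<phi> i)))\<^sup>2 =
        (det_nat k (\<lambda>i j. inner (h j) (\<phi> i)))\<^sup>2 * d powr (- 2 * (\<Sum>i<k. w (\<phi> i)))"
      by simp
  qed
  finally show ?thesis .
qed

lemma cos_angle_tau_image_eq:
  assumes x: "0 < x" and h: "ordered_basis H k h" and u: "ordered_basis V k u"
    and \<nu>: "\<And>j. j < k \<Longrightarrow> homogeneous tau (\<nu> j) (u j)"
  shows "cos_angle (tau x ` H) V =
    \<bar>wedge_inner k h u\<bar> * sqrt (fact k) / sqrt (wedge_inner k u u) /
    sqrt (\<Sum>\<phi>\<in>PiE {..<k} (\<lambda>_. E). (det_nat k (\<lambda>i j. inner (h j) (\<phi> i)))\<^sup>2 *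
      x powr (2 * (\<Sum>j<k. \<nu> j) - 2 * (\<Sum>i<k. w (\<phi> i))))"
    (is "_ = ?K / sqrt ?g")
proof -
  define q where "q = x powr (- (\<Sum>j<k. \<nu> j))"
  have q: "0 < q" using x by (simp add: q_def)
  have "(det_nat k (\<lambda>i j. inner (h j) (\<phi> i)))\<^sup>2 * x powr (- 2 * (\<Sum>i<k. w (\<phi> i))) =
      q\<^sup>2 * ((det_nat k (\<lambda>i j. inner (h j) (\<phi> i)))\<^sup>2 *
        x powr (2 * (\<Sum>j<k. \<nu> j) - 2 * (\<Sum>i<k. w (\<phi> i))))" for \<phi>
  proof -
    have "q\<^sup>2 * x powr (2 * (\<Sum>j<k. \<nu> j) - 2 * (\<Sum>i<k. w (\<phi> i))) =
        x powr (- 2 * (\<Sum>i<k. w (\<phi> i)))"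
      unfolding q_def power2_eq_square by (simp flip: powr_add)
    then show ?thesis by (simp only: mult.left_commute[of "q\<^sup>2"])
  qed
  then have "fact k * wedge_inner k (\<lambda>i. tau x (h i)) (\<lambda>i. tau x (h i)) = q\<^sup>2 * ?g"
    unfolding fact_wedge_inner_tau_self[OF x] sum_distrib_left by (simp only:)
  then have "wedge_inner k (\<lambda>i. tau x (h i)) (\<lambda>i. tau x (h i)) = q\<^sup>2 * ?g / fact k"
    by (simp add: field_simps)
  moreover have "wedge_inner k (\<lambda>i. tau x (h i)) u = q * wedge_inner k h u"
    unfolding q_def by (rule wedge_inner_tau_homogeneous[OF x \<nu>])
  moreover have "cos_angle (tau x ` H) V = \<bar>wedge_inner k (\<lambda>i. tau x (h i)) u\<bar> /
      (sqrt (wedge_inner k (\<lambda>i. tau x (h i)) (\<lambda>i. tau x (h i))) * sqrt (wedge_inner k u u))"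
    by (rule cos_angle_ordered_basis[OF ordered_basis_tau_image[OF x h] u])
  ultimately have "cos_angle (tau x ` H) V =
      q * \<bar>wedge_inner k h u\<bar> / (sqrt (q\<^sup>2 * ?g / fact k) * sqrt (wedge_inner k u u))"
    using q by (simp add: abs_mult)
  also have "sqrt (q\<^sup>2 * ?g / fact k) = q * sqrt ?g / sqrt (fact k)"
    using q by (simp add: real_sqrt_mult real_sqrt_divide)
  also have "q * \<bar>wedge_inner k h u\<bar> / (q * sqrt ?g / sqrt (fact k) * sqrt (wedge_inner k u u)) =
      ?K / sqrt ?g"
    using q by (simp add: field_simps)
  finally show ?thesis .
qed

lemma cos_angle_tau_image_posynomial:
  assumes H: "subspace H" and V: "subspace V" and "dim H = dim V"
    and inv: "dilation_invariant tau V"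
  obtains K and I :: "(nat \<Rightarrow> 'a) set" and \<alpha> \<beta> where "0 \<le> K" "finite I" "\<And>i. 0 \<le> \<alpha> i"
    "\<And>x. 0 < x \<Longrightarrow> cos_angle (tau x ` H) V = K / sqrt (\<Sum>i\<in>I. \<alpha> i * x powr \<beta> i)"
proof -
  obtain h where "ordered_basis H (dim V) h"
    unfolding assms(3)[symmetric] by (rule ordered_basis_from_spanning[OF H subset_refl span_superset])
  moreover obtain u where "ordered_basis V (dim V) u"
    and "\<And>j. j < dim V \<Longrightarrow> u j \<in> V \<inter> {x. \<exists>\<nu>. homogeneous tau \<nu> x}"
    by (rule ordered_basis_from_spanning[OF V Int_lower1
          dilation_invariant_subset_span_homogeneous[OF V inv]]) (rule that)
  moreover define k where "k = dim V"
  ultimately have h: "ordered_basis H k h" and u: "ordered_basis V k u"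
    and "\<And>j. j < k \<Longrightarrow> \<exists>\<nu>. homogeneous tau \<nu> (u j)"
    by auto
  then obtain \<nu> where \<nu>: "\<And>j. j < k \<Longrightarrow> homogeneous tau (\<nu> j) (u j)" by metis
  show ?thesis
    by (rule that[OF _ _ _ cos_angle_tau_image_eq[OF _ h u \<nu>]])
      (simp_all add: finite_E finite_PiE wedge_inner_self_nonneg)
qed

end

lemma convex_on_sum_exp_powr:
  assumes "finite I" and "\<And>i. i \<in> I \<Longrightarrow> 0 \<le> \<alpha> i"
  shows "convex_on UNIV (\<lambda>t. \<Sum>i\<in>I. \<alpha> i * exp t powr \<beta> i)"
  using assms
proof (induction I rule: finite_induct)
  case empty
  then show ?case by (simp add: convex_on_const)
next
  case (insert i I)
  have "convex_on UNIV (\<lambda>t. exp (\<beta> i * t))"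
    by (intro f''_ge0_imp_convex derivative_eq_intros | simp)+ (simp add: mult.assoc)
  then have "convex_on UNIV (\<lambda>t. \<alpha> i * exp (\<beta> i * t))"
    using insert.prems by (intro convex_on_cmul) auto
  then show ?case
    using insert by (simp add: powr_def mult.commute convex_on_add)
qed

lemma convex_on_less_imp_less_left:
  fixes \<phi> :: "real \<Rightarrow> real"
  assumes "convex_on UNIV \<phi>" and "s < t" and "t < u" and "\<phi> u < \<phi> t"
  shows "\<phi> t < \<phi> s"
proof -
  define \<theta> where "\<theta> = (t - s) / (u - s)"
  have \<theta>: "0 < \<theta>" "\<theta> < 1" using assms(2,3) by (auto simp: \<theta>_def divide_simps)
  have "\<theta> * (u - s) = t - s" using assms(2,3) by (simp add: \<theta>_def)
  then have "t = (1 - \<theta>) *\<^sub>R s + \<theta> *\<^sub>R u" by (simp add: algebra_simps)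
  then have "\<phi> t \<le> (1 - \<theta>) * \<phi> s + \<theta> * \<phi> u"
    using convex_onD[OF assms(1), of \<theta> s u] \<theta> by simp
  also have "\<dots> < (1 - \<theta>) * \<phi> s + \<theta> * \<phi> t" using \<theta> assms(4) by simp
  finally have "(1 - \<theta>) * \<phi> t < (1 - \<theta>) * \<phi> s" by (simp add: algebra_simps)
  then show ?thesis using \<theta> by (simp add: mult_less_cancel_left_pos)
qed

lemma div_sqrt_posynomial_unimodal:
  fixes f :: "real \<Rightarrow> real" and \<alpha> \<beta> :: "'i \<Rightarrow> real"
  assumes I: "finite I" and \<alpha>: "\<And>i. 0 \<le> \<alpha> i" and K: "0 \<le> K"
    and f: "\<And>x. 0 < x \<Longrightarrow> f x = K / sqrt (\<Sum>i\<in>I. \<alpha> i * x powr \<beta> i)"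
    and abc: "0 < a" "a < b" "b < c" and fbc: "f b < f c"
  shows "f a < f b"
proof -
  define g where "g x = (\<Sum>i\<in>I. \<alpha> i * x powr \<beta> i)" for x
  have f: "f x = K / sqrt (g x)" if "0 < x" for x using f[OF that] by (simp add: g_def)
  have g_nonneg: "0 \<le> g x" for x unfolding g_def using \<alpha> by (intro sum_nonneg) simp
  have fb: "f b = K / sqrt (g b)" and fc: "f c = K / sqrt (g c)" and fa: "f a = K / sqrt (g a)"
    using abc f by simp_all
  have "\<exists>i\<in>I. \<alpha> i \<noteq> 0"
  proof (rule ccontr)
    assume "\<not> (\<exists>i\<in>I. \<alpha> i \<noteq> 0)"
    then have "g b = 0" "g c = 0" unfolding g_def by simp_all
    then show False using fbc fb fc by simp
  qed
  then obtain i where i: "i \<in> I" "\<alpha> i \<noteq> 0" by blast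
  have "0 < \<alpha> i" using i(2) \<alpha>[of i] by simp
  have g_pos: "0 < g x" if "0 < x" for x
    unfolding g_def using \<open>0 < \<alpha> i\<close> that \<alpha> by (intro sum_pos2[OF I i(1)]) simp_all
  have "K \<noteq> 0" using fbc fb fc by auto
  then have K_pos: "0 < K" using K by simp
  have g_bc: "0 < g b" "0 < g c" using g_pos abc by simp_all
  have "g c < g b"
  proof (rule ccontr)
    assume "\<not> g c < g b"
    then have "sqrt (g b) \<le> sqrt (g c)" by simp
    moreover have "0 < sqrt (g c) * sqrt (g b)" using g_bc by simp
    ultimately have "K / sqrt (g c) \<le> K / sqrt (g b)" by (rule divide_left_mono[OF _ K])
    then show False using fbc fb fc by simp
  qed
  then have "g (exp (ln c)) < g (exp (ln b))" using abc by simp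
  moreover have "convex_on UNIV (\<lambda>t. g (exp t))"
    unfolding g_def using I \<alpha> by (intro convex_on_sum_exp_powr)
  moreover have "ln a < ln b" "ln b < ln c" using abc by simp_all
  ultimately have "g (exp (ln b)) < g (exp (ln a))"
    using convex_on_less_imp_less_left by blast
  then have "sqrt (g b) < sqrt (g a)" using abc by simp
  then show ?thesis
    unfolding fa fb using K_pos g_pos abc by (intro divide_strict_left_mono) auto
qed

lemma pairwise_orthogonal_UN:
  fixes B :: "'i \<Rightarrow> 'a::real_inner set"
  assumes "\<And>i. i \<in> A \<Longrightarrow> pairwise real_inner_class.orthogonal (B i)"
    and "\<And>i j x y. i \<in> A \<Longrightarrow> j \<in> A \<Longrightarrow> i \<noteq> j \<Longrightarrow> x \<in> B i \<Longrightarrow> y \<in> B j \<Longrightarrow> inner x y = 0"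
  shows "pairwise real_inner_class.orthogonal (\<Union>i\<in>A. B i)"
  using assms unfolding pairwise_def real_inner_class.orthogonal_def by blast

lemma hilbert_dilation_system_eigenbasis:
  fixes Xs :: "nat \<Rightarrow> 'a::euclidean_space set"
  assumes "hilbert_dilation_system m Xs tau"
  obtains E w where "dilation_eigenbasis tau E w"
proof -
  have sub: "\<And>\<nu>. \<nu> \<in> {1..m} \<Longrightarrow> subspace (Xs \<nu>)"
    and orth: "\<And>\<nu> \<mu> x y. \<nu> \<in> {1..m} \<Longrightarrow> \<mu> \<in> {1..m} \<Longrightarrow> \<nu> \<noteq> \<mu> \<Longrightarrow> x \<in> Xs \<nu> \<Longrightarrow> y \<in> Xs \<mu> \<Longrightarrow>
      inner x y = 0"
    and span_Xs: "span (\<Union>\<nu>\<in>{1..m}. Xs \<nu>) = UNIV"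
    and lin: "\<And>d. 0 < d \<Longrightarrow> linear (tau d)"
    and tau_Xs: "\<And>d \<nu> x. 0 < d \<Longrightarrow> \<nu> \<in> {1..m} \<Longrightarrow> x \<in> Xs \<nu> \<Longrightarrow> tau d x = d powr (- real \<nu>) *\<^sub>R x"
    using assms unfolding hilbert_dilation_system_def by blast+
  have "\<exists>B. B \<subseteq> Xs \<nu> \<and> pairwise real_inner_class.orthogonal B \<and> (\<forall>x\<in>B. norm x = 1) \<and>
      independent B \<and> span B = Xs \<nu>" if "\<nu> \<in> {1..m}" for \<nu>
    using orthonormal_basis_subspace[OF sub[OF that]] by metis
  then obtain B where B: "\<And>\<nu>. \<nu> \<in> {1..m} \<Longrightarrow> B \<nu> \<subseteq> Xs \<nu> \<and>
      pairwise real_inner_class.orthogonal (B \<nu>) \<and> (\<forall>x\<in>B \<nu>. norm x = 1) \<and>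
      independent (B \<nu>) \<and> span (B \<nu>) = Xs \<nu>"
    by metis
  define E where "E = (\<Union>\<nu>\<in>{1..m}. B \<nu>)"
  define \<nu> where "\<nu> e = (SOME \<nu>. \<nu> \<in> {1..m} \<and> e \<in> B \<nu>)" for e
  have \<nu>: "\<nu> e \<in> {1..m}" "e \<in> Xs (\<nu> e)" if "e \<in> E" for e
    using someI_ex[of "\<lambda>\<nu>. \<nu> \<in> {1..m} \<and> e \<in> B \<nu>"] B that unfolding E_def \<nu>_def by blast+
  have "Xs \<nu> \<subseteq> span E" if "\<nu> \<in> {1..m}" for \<nu>
    using B[OF that] span_mono[of "B \<nu>" E] that unfolding E_def by blast
  then have "span (\<Union>\<nu>\<in>{1..m}. Xs \<nu>) \<subseteq> span E"
    by (metis UN_least span_mono span_span)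
  then have "span E = UNIV" using span_Xs by auto
  show ?thesis
  proof (rule that[of E "\<lambda>e. real (\<nu> e)"], rule dilation_eigenbasis.intro)
    show "finite E" unfolding E_def using B finiteI_independent by blast
    show "pairwise real_inner_class.orthogonal E"
      unfolding E_def using B orth by (intro pairwise_orthogonal_UN) blast+
    show "norm e = 1" if "e \<in> E" for e using B that unfolding E_def by blast
    show "linear (tau d)" if "0 < d" for d using that by (rule lin)
    show "tau d e = d powr (- real (\<nu> e)) *\<^sub>R e" if "0 < d" "e \<in> E" for d e
      using tau_Xs[OF that(1) \<nu>[OF that(2)]] .
  qed fact
qed

theorem lemma4p6:
  fixes Xs :: "nat \<Rightarrow> 'a::euclidean_space set"
    and tau :: "real \<Rightarrow> 'a \<Rightarrow> 'a"
    and H V :: "'a set"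
    and f :: "real \<Rightarrow> real"
    and a b c :: real
  assumes "hilbert_dilation_system m Xs tau"
    and "subspace H" and "subspace V"
    and "dim H = dim V" and "dim H \<ge> 1"
    and "dilation_invariant tau V"
    and "\<And>d. d > 0 \<Longrightarrow> f d = cos_angle (tau d ` H) V"
    and "0 < a" and "a < b" and "b < c"
    and "f b < f c"
  shows "f a < f b"
proof -
  obtain E w where "dilation_eigenbasis tau E w"
    using hilbert_dilation_system_eigenbasis[OF assms(1)] .
  then interpret dilation_eigenbasis tau E w .
  obtain K and I :: "(nat \<Rightarrow> 'a) set" and \<alpha> \<beta> where K: "0 \<le> K" and I: "finite I"
    and \<alpha>: "\<And>i. 0 \<le> \<alpha> i"
    and cos: "\<And>x. 0 < x \<Longrightarrow> cos_angle (tau x ` H) V = K / sqrt (\<Sum>i\<in>I. \<alpha> i * x powr \<beta> i)"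
    by (rule cos_angle_tau_image_posynomial[OF assms(2-4,6)]) (rule that)
  have "f x = K / sqrt (\<Sum>i\<in>I. \<alpha> i * x powr \<beta> i)" if "0 < x" for x
    using assms(7)[OF that] cos[OF that] by simp
  from div_sqrt_posynomial_unimodal[OF I \<alpha> K this assms(8-11)] show ?thesis .
qed

end
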